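(* Let $\mathbf{V}_1,\dots,\mathbf{V}_L\in\mathbb{R}^{1\times d}$ be value vectors and $\mathbf{y}$ a target embedding. Let $H$ be the Hessian of the objective of the linear coding problem $\min_\alpha\|\sum_{j=1}^L\alpha_j\mathbf{V}_j-\mathbf{y}\|_2^2$ (subject to $\sum_j\alpha_j=1,\ \alpha_j>0$), and let $\bar H$ be the Hessian of the objective of the group coding problem $\min_{\bar\alpha}\|\sum_{g=1}^k\frac{\bar\alpha_g}{|G_g|}\sum_{j\in G_g}\mathbf{V}_j-\mathbf{y}\|_2^2$ (subject to $\sum_g\bar\alpha_g=1,\ \bar\alpha_g>0$), where $G_1,\dots,G_k$ partition $\{1,\dots,L\}$ and each group has size $|G_g|=m$. For a matrix $A$ let $\kappa(A)=\lambda_{\max}(A)/\lambda_{\min}(A)$ be its condition number, with $\lambda_{\max},\lambda_{\min}$ its maximum and minimum eigenvalues. If $\lambda_{\min}(H)>0$ and $\lambda_{\min}(\bar H)>0$, then $\kappa(\bar H)\le\kappa(H)$. *)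

theory Defs
  imports "HOL-Analysis.Analysis"
begin

definition hessian :: "(real^'n \<Rightarrow> real) \<Rightarrow> real^'n \<Rightarrow> real^'n^'n" where
  "hessian f x = (\<chi> i j. deriv (\<lambda>t. deriv (\<lambda>s. f (x + t *\<^sub>R axis i 1 + s *\<^sub>R axis j 1)) 0) 0)"

definition eigvals :: "real^'n^'n \<Rightarrow> real set" where
  "eigvals A = {c. \<exists>v. v \<noteq> 0 \<and> A *v v = c *\<^sub>R v}"

definition lambda_max :: "real^'n^'n \<Rightarrow> real" where
  "lambda_max A = Max (eigvals A)"

definition lambda_min :: "real^'n^'n \<Rightarrow> real" where
  "lambda_min A = Min (eigvals A)"

definition cond_num :: "real^'n^'n \<Rightarrow> real" where
  "cond_num A = lambda_max A / lambda_min A"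

definition lin_obj :: "('L::finite \<Rightarrow> real^'d) \<Rightarrow> real^'d \<Rightarrow> real^'L \<Rightarrow> real" where
  "lin_obj V y \<alpha> = (norm ((\<Sum>j\<in>UNIV. (\<alpha> $ j) *\<^sub>R V j) - y))\<^sup>2"

definition grp_obj :: "('L::finite \<Rightarrow> real^'d) \<Rightarrow> real^'d \<Rightarrow> ('L \<Rightarrow> 'k::finite) \<Rightarrow> real^'k \<Rightarrow> real" where
  "grp_obj V y grp \<beta> =
     (norm ((\<Sum>g\<in>UNIV. (\<beta> $ g / real (card {j. grp j = g})) *\<^sub>R (\<Sum>j\<in>{j. grp j = g}. V j)) - y))\<^sup>2"

end

theory Submission
  imports Defs
begin

text \<open>Both objectives are quadratic, so their Hessians are constant: \<open>H = 2 G(V)\<close> and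
  \<open>H' = 2 G(W)\<close>, where \<open>G\<close> is the Gram matrix and \<open>W g\<close> is the mean of the value vectors
  of group \<open>g\<close>.
  Spreading group weights uniformly over the \<open>m\<close> members of each group,
  \<open>z j = x (grp j) / m\<close>, gives \<open>x \<bullet> H' x = z \<bullet> H z\<close> and \<open>|z|\<^sup>2 = |x|\<^sup>2 / m\<close>.
  As the extreme eigenvalues of a symmetric matrix are the extreme values of its
  Rayleigh quotient, \<open>lambda_max H' \<le> lambda_max H / m\<close> and
  \<open>lambda_min H' \<ge> lambda_min H / m\<close>; the factors \<open>1/m\<close> cancel in the condition number.\<close>

lemma linear_coeff_zero_if_nonneg_quadratic:
  fixes a b :: real
  assumes "\<And>t. 0 \<le> t * b + t\<^sup>2 * a"
  shows "b = 0"
proof -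
  define c where "c = \<bar>a\<bar> + 1"
  have "c > 0" "a \<le> c - 1" by (auto simp: c_def)
  define t where "t = - b / c"
  have "0 \<le> t * b + t\<^sup>2 * (c - 1)"
    using assms[of t] mult_left_mono[OF \<open>a \<le> c - 1\<close>, of "t\<^sup>2"] by simp
  also have "\<dots> = - (b / c)\<^sup>2"
    using \<open>c > 0\<close> unfolding t_def by (simp add: field_simps power2_eq_square)
  finally show ?thesis using \<open>c > 0\<close> by simp
qed

lemma symmetric_matrix_inner:
  fixes A :: "real^'n^'n"
  assumes "transpose A = A"
  shows "x \<bullet> (A *v y) = (A *v x) \<bullet> y"
  by (metis assms dot_lmul_matrix transpose_matrix_vector)

lemma quadratic_form_scaleR:
  fixes A :: "real^'n^'n"
  shows "(c *\<^sub>R x) \<bullet> (A *v (c *\<^sub>R x)) = c\<^sup>2 * (x \<bullet> (A *v x))"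
  by (simp add: matrix_vector_mult_scaleR power2_eq_square)

lemma psd_quadratic_form_zero_imp_kernel:
  fixes B :: "real^'n^'n"
  assumes symm: "transpose B = B" and psd: "\<And>x. 0 \<le> x \<bullet> (B *v x)"
    and zero: "x \<bullet> (B *v x) = 0"
  shows "B *v x = 0"
proof -
  define w where "w = B *v x"
  have "(x + t *\<^sub>R w) \<bullet> (B *v (x + t *\<^sub>R w)) = t * (2 * (w \<bullet> w)) + t\<^sup>2 * (w \<bullet> (B *v w))" for t
    using zero symmetric_matrix_inner[OF symm, of x w]
    by (simp add: w_def matrix_vector_right_distrib matrix_vector_mult_scaleR inner_add_left
        inner_add_right inner_commute power2_eq_square algebra_simps)
  then have "0 \<le> t * (2 * (w \<bullet> w)) + t\<^sup>2 * (w \<bullet> (B *v w))" for t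
    using psd[of "x + t *\<^sub>R w"] by simp
  then have "2 * (w \<bullet> w) = 0"
    by (rule linear_coeff_zero_if_nonneg_quadratic)
  then show ?thesis by (simp add: w_def)
qed

lemma rayleigh_max_imp_eigenvector:
  fixes A :: "real^'n^'n"
  assumes symm: "transpose A = A" and le: "\<And>x. x \<bullet> (A *v x) \<le> \<nu> * (norm x)\<^sup>2"
    and eq: "x \<bullet> (A *v x) = \<nu> * (norm x)\<^sup>2"
  shows "A *v x = \<nu> *\<^sub>R x"
proof -
  define B where "B = \<nu> *\<^sub>R mat 1 - A"
  have B_mult: "B *v v = \<nu> *\<^sub>R v - A *v v" for v
    by (simp add: B_def matrix_vector_mult_diff_rdistrib scaleR_matrix_vector_assoc[symmetric])
  have B_form: "v \<bullet> (B *v v) = \<nu> * (norm v)\<^sup>2 - v \<bullet> (A *v v)" for v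
    by (simp add: B_mult inner_diff_right power2_norm_eq_inner)
  have "transpose B = B"
    using symm by (simp add: B_def vec_eq_iff transpose_def mat_def)
  moreover have "0 \<le> v \<bullet> (B *v v)" for v
    using le[of v] by (simp add: B_form)
  ultimately have "B *v x = 0"
    by (rule psd_quadratic_form_zero_imp_kernel) (simp add: B_form eq)
  then show ?thesis by (simp add: B_mult)
qed

lemma rayleigh_max_eigval:
  fixes A :: "real^'n^'n"
  assumes symm: "transpose A = A"
  shows "\<exists>\<nu>\<in>eigvals A. \<forall>x. x \<bullet> (A *v x) \<le> \<nu> * (norm x)\<^sup>2"
proof -
  let ?R = "\<lambda>x. x \<bullet> (A *v x)"
  have "continuous_on (sphere 0 1) ?R"
    by (intro continuous_intros linear_continuous_on matrix_vector_mul_bounded_linear)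
  moreover have "axis undefined 1 \<in> sphere (0::real^'n) 1"
    by (simp add: norm_axis_1)
  ultimately obtain x0 where x0: "x0 \<in> sphere 0 1" and max: "\<And>u. u \<in> sphere 0 1 \<Longrightarrow> ?R u \<le> ?R x0"
    using continuous_attains_sup[OF compact_sphere] by blast
  have bound: "?R x \<le> ?R x0 * (norm x)\<^sup>2" for x
  proof (cases "x = 0")
    case False
    then have "x = norm x *\<^sub>R (x /\<^sub>R norm x)" by simp
    then have "?R x = ?R (norm x *\<^sub>R (x /\<^sub>R norm x))" by (rule arg_cong)
    also have "\<dots> = (norm x)\<^sup>2 * ?R (x /\<^sub>R norm x)" by (rule quadratic_form_scaleR)
    also have "\<dots> \<le> (norm x)\<^sup>2 * ?R x0"
      using False by (intro mult_left_mono max) auto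
    finally show ?thesis by (simp add: mult.commute)
  qed simp
  have "norm x0 = 1" using x0 by simp
  then have "A *v x0 = ?R x0 *\<^sub>R x0"
    using rayleigh_max_imp_eigenvector[OF symm bound] by simp
  moreover have "x0 \<noteq> 0" using \<open>norm x0 = 1\<close> by auto
  ultimately have "?R x0 \<in> eigvals A" unfolding eigvals_def by blast
  with bound show ?thesis by blast
qed

lemma rayleigh_min_eigval:
  fixes A :: "real^'n^'n"
  assumes "transpose A = A"
  shows "\<exists>\<mu>\<in>eigvals A. \<forall>x. \<mu> * (norm x)\<^sup>2 \<le> x \<bullet> (A *v x)"
proof -
  have neg: "(- A) *v x = - (A *v x)" for x
    by (simp add: vec_eq_iff matrix_vector_mult_def sum_negf)
  have "transpose (- A) = - A"
    using assms by (simp add: vec_eq_iff transpose_def)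
  then obtain \<nu> where "\<nu> \<in> eigvals (- A)" and le: "\<forall>x. x \<bullet> ((- A) *v x) \<le> \<nu> * (norm x)\<^sup>2"
    using rayleigh_max_eigval by blast
  then obtain v where "v \<noteq> 0" and "- (A *v v) = \<nu> *\<^sub>R v"
    unfolding eigvals_def neg by blast
  then have "v \<noteq> 0 \<and> A *v v = (- \<nu>) *\<^sub>R v"
    by (simp add: minus_equation_iff[of "A *v v"])
  then have "- \<nu> \<in> eigvals A" unfolding eigvals_def by blast
  moreover have "- \<nu> * (norm x)\<^sup>2 \<le> x \<bullet> (A *v x)" for x
    using le[rule_format, of x] by (simp add: neg)
  ultimately show ?thesis by blast
qed

lemma finite_eigvals_symmetric:
  fixes A :: "real^'n^'n"
  assumes symm: "transpose A = A"
  shows "finite (eigvals A)"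
proof -
  have "\<forall>c\<in>eigvals A. \<exists>v. v \<noteq> 0 \<and> A *v v = c *\<^sub>R v"
    unfolding eigvals_def by blast
  then obtain ev where ev: "\<And>c. c \<in> eigvals A \<Longrightarrow> ev c \<noteq> 0 \<and> A *v ev c = c *\<^sub>R ev c"
    by (rule bchoice[THEN exE]) blast
  have orth: "ev c \<bullet> ev d = 0" if "c \<in> eigvals A" "d \<in> eigvals A" "c \<noteq> d" for c d
  proof -
    have "c * (ev c \<bullet> ev d) = (A *v ev c) \<bullet> ev d" using ev[OF that(1)] by simp
    also have "\<dots> = ev c \<bullet> (A *v ev d)" using symmetric_matrix_inner[OF symm] by simp
    also have "\<dots> = d * (ev c \<bullet> ev d)" using ev[OF that(2)] by simp
    finally show ?thesis using that(3) by simp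
  qed
  have "inj_on ev (eigvals A)"
  proof (rule inj_onI)
    fix c d assume "c \<in> eigvals A" "d \<in> eigvals A" "ev c = ev d"
    then show "c = d" using orth[of c d] ev[of c] by auto
  qed
  moreover have "independent (ev ` eigvals A)"
    using orth ev by (intro pairwise_orthogonal_independent) (auto simp: pairwise_def orthogonal_def)
  then have "finite (ev ` eigvals A)" using independent_bound by blast
  ultimately show ?thesis using finite_imageD by blast
qed

lemma lambda_max_symmetric:
  fixes A :: "real^'n^'n"
  assumes "transpose A = A"
  shows "lambda_max A \<in> eigvals A" and "x \<bullet> (A *v x) \<le> lambda_max A * (norm x)\<^sup>2"
proof -
  obtain \<nu> where \<nu>: "\<nu> \<in> eigvals A" "\<forall>x. x \<bullet> (A *v x) \<le> \<nu> * (norm x)\<^sup>2"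
    using rayleigh_max_eigval[OF assms] by blast
  have fin: "finite (eigvals A)" by (rule finite_eigvals_symmetric[OF assms])
  with \<nu>(1) show "lambda_max A \<in> eigvals A" unfolding lambda_max_def by (intro Max_in) auto
  have "\<nu> \<le> lambda_max A" unfolding lambda_max_def using fin \<nu>(1) by simp
  then have "\<nu> * (norm x)\<^sup>2 \<le> lambda_max A * (norm x)\<^sup>2" by (simp add: mult_right_mono)
  with \<nu>(2) show "x \<bullet> (A *v x) \<le> lambda_max A * (norm x)\<^sup>2" by (meson order_trans)
qed

lemma lambda_min_symmetric:
  fixes A :: "real^'n^'n"
  assumes "transpose A = A"
  shows "lambda_min A \<in> eigvals A" and "lambda_min A * (norm x)\<^sup>2 \<le> x \<bullet> (A *v x)"
proof -
  obtain \<mu> where \<mu>: "\<mu> \<in> eigvals A" "\<forall>x. \<mu> * (norm x)\<^sup>2 \<le> x \<bullet> (A *v x)"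
    using rayleigh_min_eigval[OF assms] by blast
  have fin: "finite (eigvals A)" by (rule finite_eigvals_symmetric[OF assms])
  with \<mu>(1) show "lambda_min A \<in> eigvals A" unfolding lambda_min_def by (intro Min_in) auto
  have "lambda_min A \<le> \<mu>" unfolding lambda_min_def using fin \<mu>(1) by simp
  then have "lambda_min A * (norm x)\<^sup>2 \<le> \<mu> * (norm x)\<^sup>2" by (simp add: mult_right_mono)
  with \<mu>(2) show "lambda_min A * (norm x)\<^sup>2 \<le> x \<bullet> (A *v x)" by (meson order_trans)
qed

lemma eigval_quadratic_form:
  fixes A :: "real^'n^'n"
  assumes "c \<in> eigvals A"
  obtains v where "v \<noteq> 0" and "v \<bullet> (A *v v) = c * (norm v)\<^sup>2"
  using assms unfolding eigvals_def by (auto simp: power2_norm_eq_inner)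

lemma lambda_min_le_lambda_max:
  fixes A :: "real^'n^'n"
  assumes "transpose A = A"
  shows "lambda_min A \<le> lambda_max A"
proof -
  obtain v where "v \<noteq> 0" and "v \<bullet> (A *v v) = lambda_min A * (norm v)\<^sup>2"
    using eigval_quadratic_form lambda_min_symmetric(1)[OF assms] by blast
  with lambda_max_symmetric(2)[OF assms, of v] show ?thesis by simp
qed

context
  fixes H :: "real^'n^'n" and K :: "real^'m^'m" and P :: "real^'m \<Rightarrow> real^'n" and c :: real
  assumes symm_H: "transpose H = H" and symm_K: "transpose K = K"
    and form: "\<And>x. x \<bullet> (K *v x) = P x \<bullet> (H *v P x)"
    and norm_P: "\<And>x. (norm (P x))\<^sup>2 = c * (norm x)\<^sup>2"
begin

lemma lambda_max_le_compression: "lambda_max K \<le> c * lambda_max H"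
proof -
  obtain v where "v \<noteq> 0" and v: "v \<bullet> (K *v v) = lambda_max K * (norm v)\<^sup>2"
    using eigval_quadratic_form lambda_max_symmetric(1)[OF symm_K] by blast
  have "lambda_max K * (norm v)\<^sup>2 = P v \<bullet> (H *v P v)" using v form by simp
  also have "\<dots> \<le> (c * lambda_max H) * (norm v)\<^sup>2"
    using lambda_max_symmetric(2)[OF symm_H, of "P v"] by (simp add: norm_P mult_ac)
  finally show ?thesis using \<open>v \<noteq> 0\<close> by simp
qed

lemma lambda_min_ge_compression: "c * lambda_min H \<le> lambda_min K"
proof -
  obtain v where "v \<noteq> 0" and v: "v \<bullet> (K *v v) = lambda_min K * (norm v)\<^sup>2"
    using eigval_quadratic_form lambda_min_symmetric(1)[OF symm_K] by blast
  have "(c * lambda_min H) * (norm v)\<^sup>2 \<le> P v \<bullet> (H *v P v)"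
    using lambda_min_symmetric(2)[OF symm_H, of "P v"] by (simp add: norm_P mult_ac)
  also have "\<dots> = lambda_min K * (norm v)\<^sup>2" using v form by simp
  finally show ?thesis using \<open>v \<noteq> 0\<close> by simp
qed

lemma cond_num_le_compression:
  assumes "c > 0" and "lambda_min H > 0" and "lambda_min K > 0"
  shows "cond_num K \<le> cond_num H"
proof -
  have "0 \<le> lambda_max H"
    using lambda_min_le_lambda_max[OF symm_H] assms(2) by linarith
  then have "lambda_max K * lambda_min H \<le> (c * lambda_max H) * lambda_min H"
    using lambda_max_le_compression assms(2) by (intro mult_right_mono) auto
  also have "\<dots> = lambda_max H * (c * lambda_min H)" by simp
  also have "\<dots> \<le> lambda_max H * lambda_min K"
    using lambda_min_ge_compression \<open>0 \<le> lambda_max H\<close> by (rule mult_left_mono)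
  finally show ?thesis
    using assms(2,3) unfolding cond_num_def by (simp add: divide_le_eq field_simps)
qed

end

definition gram_matrix :: "('n::finite \<Rightarrow> 'a::real_inner) \<Rightarrow> real^'n^'n" where
  "gram_matrix F = (\<chi> i j. F i \<bullet> F j)"

lemma transpose_gram_matrix: "transpose (gram_matrix F) = gram_matrix F"
  by (simp add: gram_matrix_def vec_eq_iff transpose_def inner_commute)

lemma quadratic_form_gram_matrix:
  "x \<bullet> (gram_matrix F *v x) = (norm (\<Sum>i\<in>UNIV. x $ i *\<^sub>R F i))\<^sup>2"
  by (simp add: gram_matrix_def matrix_vector_mult_def inner_vec_def power2_norm_eq_inner
      inner_sum_left inner_sum_right sum_distrib_left inner_commute mult_ac)

lemma hessian_lin_obj: "hessian (lin_obj F y) x = 2 *\<^sub>R gram_matrix F"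
proof -
  define r where "r = (\<Sum>k\<in>UNIV. x $ k *\<^sub>R F k) - y"
  have axis_sum: "(\<Sum>k\<in>UNIV. (c * axis i 1 $ k) *\<^sub>R F k) = c *\<^sub>R F i" for c i
    by (subst sum.remove[of _ i]) (auto simp: axis_def)
  have shift: "lin_obj F y (x + t *\<^sub>R axis i 1 + s *\<^sub>R axis j 1)
      = (norm (r + t *\<^sub>R F i + s *\<^sub>R F j))\<^sup>2" for t s i j
    by (simp add: lin_obj_def r_def scaleR_add_left sum.distrib axis_sum algebra_simps)
  have inner_d: "deriv (\<lambda>s. (norm (a + s *\<^sub>R b))\<^sup>2) 0 = 2 * (a \<bullet> b)" for a b :: "real^'d"
  proof -
    have "(norm (a + s *\<^sub>R b))\<^sup>2 = a \<bullet> a + 2 * s * (a \<bullet> b) + s\<^sup>2 * (b \<bullet> b)" for s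
      unfolding power2_norm_eq_inner
      by (simp add: inner_add_left inner_add_right inner_commute power2_eq_square algebra_simps)
    moreover have "((\<lambda>s. a \<bullet> a + 2 * s * (a \<bullet> b) + s\<^sup>2 * (b \<bullet> b)) has_real_derivative 2 * (a \<bullet> b)) (at 0)"
      by (auto intro!: derivative_eq_intros)
    ultimately show ?thesis by (simp add: DERIV_imp_deriv)
  qed
  have outer_d: "deriv (\<lambda>t. 2 * ((r + t *\<^sub>R F i) \<bullet> F j)) 0 = 2 * (F i \<bullet> F j)" for i j
  proof -
    have "(\<lambda>t. 2 * ((r + t *\<^sub>R F i) \<bullet> F j)) = (\<lambda>t. 2 * (r \<bullet> F j) + 2 * t * (F i \<bullet> F j))"
      by (simp add: inner_add_left algebra_simps)
    moreover have "((\<lambda>t. 2 * (r \<bullet> F j) + 2 * t * (F i \<bullet> F j)) has_real_derivative 2 * (F i \<bullet> F j)) (at 0)"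
      by (auto intro!: derivative_eq_intros)
    ultimately show ?thesis by (simp add: DERIV_imp_deriv)
  qed
  show ?thesis
    unfolding hessian_def shift
    by (simp add: vec_eq_iff gram_matrix_def inner_d outer_d add.assoc[symmetric])
qed

definition group_mean :: "('L::finite \<Rightarrow> 'a::real_vector) \<Rightarrow> ('L \<Rightarrow> 'k) \<Rightarrow> 'k \<Rightarrow> 'a" where
  "group_mean V grp g = (1 / real (card {j. grp j = g})) *\<^sub>R (\<Sum>j\<in>{j. grp j = g}. V j)"

lemma grp_obj_eq_lin_obj: "grp_obj V y grp = lin_obj (group_mean V grp) y"
  by (simp add: fun_eq_iff grp_obj_def lin_obj_def group_mean_def)

context
  fixes grp :: "'L::finite \<Rightarrow> 'k::finite" and m :: nat
  assumes group_size: "\<And>g. card {j. grp j = g} = m"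
begin

lemma sum_spread_eq_sum_group_mean:
  "(\<Sum>j\<in>UNIV. (x $ grp j / real m) *\<^sub>R V j) = (\<Sum>g\<in>UNIV. x $ g *\<^sub>R group_mean V grp g)"
proof -
  have "(\<Sum>j\<in>UNIV. (x $ grp j / real m) *\<^sub>R V j)
      = (\<Sum>g\<in>UNIV. \<Sum>j\<in>{j\<in>UNIV. grp j = g}. (x $ grp j / real m) *\<^sub>R V j)"
    by (rule sum.group[symmetric]) auto
  also have "\<dots> = (\<Sum>g\<in>UNIV. x $ g *\<^sub>R group_mean V grp g)"
    by (intro sum.cong) (auto simp: group_mean_def group_size scaleR_sum_right)
  finally show ?thesis .
qed

lemma norm_spread: "(norm (\<chi> j. x $ grp j / real m))\<^sup>2 = (norm x)\<^sup>2 / real m"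
proof -
  have "(norm (\<chi> j. x $ grp j / real m))\<^sup>2 = (\<Sum>j\<in>UNIV. (x $ grp j / real m)\<^sup>2)"
    unfolding power2_norm_eq_inner inner_vec_def by (simp add: power2_eq_square)
  also have "\<dots> = (\<Sum>g\<in>UNIV. \<Sum>j\<in>{j\<in>UNIV. grp j = g}. (x $ grp j / real m)\<^sup>2)"
    by (rule sum.group[symmetric]) auto
  also have "\<dots> = (\<Sum>g\<in>UNIV. real m * (x $ g / real m)\<^sup>2)"
    by (intro sum.cong) (auto simp: group_size)
  also have "\<dots> = (\<Sum>g\<in>UNIV. (x $ g)\<^sup>2) / real m"
    by (cases "m = 0") (auto simp: sum_divide_distrib power2_eq_square intro!: sum.cong)
  also have "\<dots> = (norm x)\<^sup>2 / real m"
    unfolding power2_norm_eq_inner inner_vec_def by (simp add: power2_eq_square)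
  finally show ?thesis .
qed

lemma group_size_pos: "m > 0"
  using group_size[of "grp undefined"] card_gt_0_iff[of "{j. grp j = grp undefined}"] by auto

end

theorem theorem3:
  fixes V :: "'L::finite \<Rightarrow> real^'d" and y :: "real^'d"
    and grp :: "'L \<Rightarrow> 'k::finite" and m :: nat
    and \<alpha> :: "real^'L" and \<beta> :: "real^'k"
  assumes group_size: "\<forall>g. card {j. grp j = g} = m"
    and alpha_simplex: "(\<Sum>j\<in>UNIV. \<alpha> $ j) = 1" "\<forall>j. \<alpha> $ j > 0"
    and beta_simplex: "(\<Sum>g\<in>UNIV. \<beta> $ g) = 1" "\<forall>g. \<beta> $ g > 0"
    and pos: "lambda_min (hessian (lin_obj V y) \<alpha>) > 0"
             "lambda_min (hessian (grp_obj V y grp) \<beta>) > 0"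
  shows "cond_num (hessian (grp_obj V y grp) \<beta>) \<le> cond_num (hessian (lin_obj V y) \<alpha>)"
proof -
  let ?H = "2 *\<^sub>R gram_matrix V" and ?K = "2 *\<^sub>R gram_matrix (group_mean V grp)"
  have sizes: "\<And>g. card {j. grp j = g} = m" using group_size by blast
  have "cond_num ?K \<le> cond_num ?H"
  proof (rule cond_num_le_compression[where P = "\<lambda>x. \<chi> j. x $ grp j / real m"])
    show "transpose ?H = ?H" "transpose ?K = ?K"
      by (simp_all add: transpose_scalar transpose_gram_matrix)
    show "x \<bullet> (?K *v x) = (\<chi> j. x $ grp j / real m) \<bullet> (?H *v (\<chi> j. x $ grp j / real m))" for x
      by (simp add: scaleR_matrix_vector_assoc[symmetric] quadratic_form_gram_matrix
          sum_spread_eq_sum_group_mean[OF sizes])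
    show "(norm (\<chi> j. x $ grp j / real m))\<^sup>2 = (1 / real m) * (norm x)\<^sup>2" for x
      using norm_spread[OF sizes] by simp
    show "1 / real m > 0" using group_size_pos[OF sizes] by simp
  qed (use pos in \<open>simp_all add: hessian_lin_obj grp_obj_eq_lin_obj\<close>)
  then show ?thesis by (simp add: hessian_lin_obj grp_obj_eq_lin_obj)
qed

end
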